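(* Let $\mathbf{u}$ be the utility profile of the truth-biased voters, let $\mathbf{a}$ be their truthful ballot vector, and let $\mathbf{a}^P$ be the ballot vector of the principled voters. Let $j=\min\{r\mid c_r\in W(\mathbf{a}+\mathbf{a}^P)\}$. Then $\mathbf{a}$ is a PNE of $(\mathcal{T},R^L,\mathbf{u},\mathbf{a}^P)$ if and only if neither of the following conditions holds: (1) $|W(\mathbf{a}+\mathbf{a}^P)|>1$, and there exist a candidate $c_k\in W(\mathbf{a}+\mathbf{a}^P)$ and a voter $i\in N$ such that $a_i\neq c_k$ and $c_k\succ_i c_j$; (2) $H(\mathbf{a}+\mathbf{a}^P)\neq\emptyset$, and there exist a candidate $c_k\in H(\mathbf{a}+\mathbf{a}^P)$ and a voter $i\in N$ such that $a_i\neq c_k$, $c_k\succ_i c_j$, and $k<j$.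
   Context: Let $C=\{c_1,\dots,c_m\}$ be candidates. There is a set $N=\{1,\dots,n\}$ of truth-biased voters, each with an injective utility function $u_i:C\to\mathbb{N}$ inducing $c\succ_i c'$ iff $u_i(c)>u_i(c')$; $a_i$ is $i$'s top candidate and $\mathbf{a}=(a_1,\dots,a_n)$. There is also a set $P=\{n+1,\dots,n+s\}$ of principled voters, who are not players and always vote for their top candidate; their ballot vector is $\mathbf{a}^P\in C^s$. A ballot vector of the truth-biased voters is $\mathbf{b}=(b_1,\dots,b_n)$, $b_i\in C\cup\{\bot\}$; $\mathbf{b}+\mathbf{a}^P$ is the combined ballot vector. For a ballot vector $\mathbf{x}$, $\mathrm{sc}(c,\mathbf{x})$ is the number of ballots for $c$, $M(\mathbf{x})=\max_c\mathrm{sc}(c,\mathbf{x})$, $W(\mathbf{x})=\{c:\mathrm{sc}(c,\mathbf{x})=M(\mathbf{x})\}$, $H(\mathbf{x})=\{c:\mathrm{sc}(c,\mathbf{x})=M(\mathbf{x})-1\}$. Under lexicographic tie-breaking $R^L$ the winner of $\mathbf{b}+\mathbf{a}^P$ is the $c_r\in W(\mathbf{b}+\mathbf{a}^P)$ with smallest index $r$. Fix $0<\varepsilon<\min\{1/m,1/n\}$. If $c$ is the winner, truth-biased voter $i$'s utility is $u_i(c)$ if $b_i\in C\setminus\{a_i\}$, $u_i(c)+\varepsilon$ if $b_i=a_i$, and $-\infty$ if $b_i=\bot$. The game $(\mathcal{T},R^L,\mathbf{u},\mathbf{a}^P)$ has players $N$ with action sets $C\cup\{\bot\}$; a PNE is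 a ballot vector $\mathbf{b}$ from which no voter in $N$ can strictly increase her utility by unilaterally changing her ballot. *)

theory Defs
  imports Main "HOL-Library.Extended_Real"
begin

(* Candidates c_1..c_m are represented by the indices 1..m.
   Truth-biased voters are 1..n, principled voters are n+1..n+s.
   A ballot of a truth-biased voter is a nat option (None = abstention \<bottom>).
   u i c is the (natural-number) utility of voter i for candidate c.
   aP i is the candidate voted for by principled voter i. *)

definition valid_ballot :: "nat \<Rightarrow> nat option \<Rightarrow> bool" where
  "valid_ballot m x \<longleftrightarrow> x = None \<or> (\<exists>c\<in>{1..m}. x = Some c)"

definition score :: "nat \<Rightarrow> nat \<Rightarrow> (nat \<Rightarrow> nat option) \<Rightarrow> (nat \<Rightarrow> nat) \<Rightarrow> nat \<Rightarrow> nat" where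
  "score n s b aP c = card {i\<in>{1..n}. b i = Some c} + card {i\<in>{n+1..n+s}. aP i = c}"

definition maxscore :: "nat \<Rightarrow> nat \<Rightarrow> nat \<Rightarrow> (nat \<Rightarrow> nat option) \<Rightarrow> (nat \<Rightarrow> nat) \<Rightarrow> nat" where
  "maxscore m n s b aP = Max (score n s b aP ` {1..m})"

definition winners :: "nat \<Rightarrow> nat \<Rightarrow> nat \<Rightarrow> (nat \<Rightarrow> nat option) \<Rightarrow> (nat \<Rightarrow> nat) \<Rightarrow> nat set" where
  "winners m n s b aP = {c\<in>{1..m}. score n s b aP c = maxscore m n s b aP}"

definition hopefuls :: "nat \<Rightarrow> nat \<Rightarrow> nat \<Rightarrow> (nat \<Rightarrow> nat option) \<Rightarrow> (nat \<Rightarrow> nat) \<Rightarrow> nat set" where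
  "hopefuls m n s b aP = {c\<in>{1..m}. int (score n s b aP c) = int (maxscore m n s b aP) - 1}"

definition lex_winner :: "nat \<Rightarrow> nat \<Rightarrow> nat \<Rightarrow> (nat \<Rightarrow> nat option) \<Rightarrow> (nat \<Rightarrow> nat) \<Rightarrow> nat" where
  "lex_winner m n s b aP = (LEAST r. r \<in> winners m n s b aP)"

definition top :: "nat \<Rightarrow> (nat \<Rightarrow> nat \<Rightarrow> nat) \<Rightarrow> nat \<Rightarrow> nat" where
  "top m u i = (THE c. c \<in> {1..m} \<and> (\<forall>c'\<in>{1..m}. u i c' \<le> u i c))"

definition truthful :: "nat \<Rightarrow> (nat \<Rightarrow> nat \<Rightarrow> nat) \<Rightarrow> nat \<Rightarrow> nat option" where
  "truthful m u = (\<lambda>i. Some (top m u i))"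

definition utility :: "nat \<Rightarrow> nat \<Rightarrow> nat \<Rightarrow> real \<Rightarrow> (nat \<Rightarrow> nat \<Rightarrow> nat) \<Rightarrow> (nat \<Rightarrow> nat)
    \<Rightarrow> (nat \<Rightarrow> nat option) \<Rightarrow> nat \<Rightarrow> ereal" where
  "utility m n s eps u aP b i =
     (case b i of
        None \<Rightarrow> -\<infinity>
      | Some c \<Rightarrow> ereal (real (u i (lex_winner m n s b aP)) + (if c = top m u i then eps else 0)))"

definition is_PNE :: "nat \<Rightarrow> nat \<Rightarrow> nat \<Rightarrow> real \<Rightarrow> (nat \<Rightarrow> nat \<Rightarrow> nat) \<Rightarrow> (nat \<Rightarrow> nat)
    \<Rightarrow> (nat \<Rightarrow> nat option) \<Rightarrow> bool" where
  "is_PNE m n s eps u aP b \<longleftrightarrow>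
     (\<forall>i\<in>{1..n}. valid_ballot m (b i)) \<and>
     (\<forall>i\<in>{1..n}. \<forall>x. valid_ballot m x \<longrightarrow>
         utility m n s eps u aP (b(i := x)) i \<le> utility m n s eps u aP b i)"

end

theory Submission
  imports Defs
begin

text \<open>A unilateral deviation of voter \<open>i\<close> from her top candidate to \<open>c\<close> raises the
score of \<open>c\<close> by one and lowers no other score except that of her top candidate. If
that top candidate is the current winner \<open>c\<^sub>j\<close>, no deviation can help her. Otherwise
the winner after the deviation is \<open>c\<close> exactly when \<open>c\<close> was already a winner, or was
one vote short and precedes \<open>c\<^sub>j\<close> in the tie-breaking order; in every other case
\<open>c\<^sub>j\<close> still wins. Since \<open>\<epsilon> < 1\<close> and utilities are integers, the deviation pays off
iff the new winner is strictly preferred to \<open>c\<^sub>j\<close>, which gives conditions (1) and (2);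
the clause \<open>|W| > 1\<close> in (1) is automatic, as \<open>c\<^sub>k \<noteq> c\<^sub>j\<close> there.\<close>

definition lex_argmax :: "nat \<Rightarrow> (nat \<Rightarrow> nat) \<Rightarrow> nat" where
  "lex_argmax m f = (LEAST r. r \<in> {c\<in>{1..m}. f c = Max (f ` {1..m})})"

lemma lex_winner_eq_lex_argmax: "lex_winner m n s b aP = lex_argmax m (score n s b aP)"
  unfolding lex_winner_def winners_def maxscore_def lex_argmax_def ..

lemma lex_argmax_eqI:
  fixes f :: "nat \<Rightarrow> nat"
  assumes "w \<in> {1..m}" "\<forall>d\<in>{1..m}. f d \<le> f w" "\<forall>d\<in>{1..m}. d < w \<longrightarrow> f d < f w"
  shows "lex_argmax m f = w"
proof -
  have "Max (f ` {1..m}) = f w"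
    using assms by (intro Max_eqI) auto
  then show ?thesis
    unfolding lex_argmax_def using assms
    by (intro Least_equality) (auto simp flip: not_less)
qed

lemma lex_argmax_mem:
  fixes f :: "nat \<Rightarrow> nat"
  assumes "m \<ge> 1"
  shows "lex_argmax m f \<in> {c\<in>{1..m}. f c = Max (f ` {1..m})}"
  unfolding lex_argmax_def
proof (rule LeastI_ex)
  have "Max (f ` {1..m}) \<in> f ` {1..m}" using assms by (intro Max_in) auto
  then show "\<exists>x. x \<in> {c\<in>{1..m}. f c = Max (f ` {1..m})}" by auto
qed

lemma less_Max_if_less_lex_argmax:
  fixes f :: "nat \<Rightarrow> nat"
  assumes "d \<in> {1..m}" "d < lex_argmax m f"
  shows "f d < Max (f ` {1..m})"
proof -
  have "f d \<le> Max (f ` {1..m})" using assms(1) by simp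
  moreover have "f d \<noteq> Max (f ` {1..m})"
    using assms not_less_Least unfolding lex_argmax_def by blast
  ultimately show ?thesis by simp
qed

text \<open>\<open>f'\<close> arises from \<open>f\<close> by moving one vote to \<open>c\<close> from a candidate other than the
winner \<open>j\<close>.\<close>

lemma lex_argmax_move_vote:
  fixes f f' :: "nat \<Rightarrow> nat" and m c :: nat
  defines "M \<equiv> Max (f ` {1..m})" and "j \<equiv> lex_argmax m f"
  assumes "m \<ge> 1" "c \<in> {1..m}"
    and "f' c = f c + 1" "\<forall>d. d \<noteq> c \<longrightarrow> f' d \<le> f d" "f j \<le> f' j"
  shows "lex_argmax m f' = (if f c = M \<or> (f c + 1 = M \<and> c < j) then c else j)"
proof -
  have le_M: "\<forall>d\<in>{1..m}. f d \<le> M" unfolding M_def by simp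
  have j: "j \<in> {1..m}" "f j = M"
    using lex_argmax_mem[OF assms(3)] unfolding j_def M_def by auto
  have before_j: "\<forall>d\<in>{1..m}. d < j \<longrightarrow> f d < M"
    using less_Max_if_less_lex_argmax unfolding j_def M_def by blast
  have drop: "f' d \<le> f d" if "d \<noteq> c" for d using assms(6) that by blast
  have others: "f' d \<le> M" if "d \<in> {1..m}" "d \<noteq> c" for d
    using drop[OF that(2)] le_M that(1) by (meson order_trans)
  consider (winner) "f c = M" | (hopeful) "f c + 1 = M" "c < j" | (other) "f c \<noteq> M"
    "\<not> (f c + 1 = M \<and> c < j)" by blast
  then show ?thesis
  proof cases
    case winner
    have above: "f' d < f' c" if "d \<in> {1..m}" "d \<noteq> c" for d
      using others[OF that] winner assms(5) by simp
    have "f' d \<le> f' c" if "d \<in> {1..m}" for d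
      using that by (cases "d = c") (simp_all add: above less_imp_le)
    then have "lex_argmax m f' = c"
      using assms(4) above by (intro lex_argmax_eqI) auto
    then show ?thesis using winner by simp
  next
    case hopeful
    have "f' d < M" if "d \<in> {1..m}" "d < c" for d
      using drop[of d] before_j hopeful that by (simp add: order.strict_trans1)
    moreover have "f' d \<le> M" if "d \<in> {1..m}" for d
      using that others assms(5) hopeful by (cases "d = c") simp_all
    ultimately have "lex_argmax m f' = c"
      using assms(4,5) hopeful by (intro lex_argmax_eqI) auto
    then show ?thesis using hopeful by simp
  next
    case other
    have "f c < M" using other le_M assms(4) by (simp add: order.not_eq_order_implies_strict)
    then have "j \<noteq> c" using j(2) by auto
    have f'_c: "f' c < M" if "c < j"
      using \<open>f c < M\<close> other that assms(5) by simp
    have "f' d < M" if "d \<in> {1..m}" "d < j" for d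
    proof (cases "d = c")
      case True
      then show ?thesis using f'_c that(2) by simp
    next
      case False
      then show ?thesis using drop[OF False] before_j that by (simp add: order.strict_trans1)
    qed
    moreover have "f' j = M"
      using drop[OF \<open>j \<noteq> c\<close>] assms(7) j(2) by simp
    moreover have "f' c \<le> M" using \<open>f c < M\<close> assms(5) by simp
    ultimately have "lex_argmax m f' = j"
      using j(1) others by (intro lex_argmax_eqI) (auto, metis)
    then show ?thesis using other by simp
  qed
qed

lemma score_fun_upd_Some:
  assumes "i \<in> {1..n}" "b i = Some e" "c \<noteq> e"
  shows "score n s (b(i := Some c)) aP d =
    (if d = c then score n s b aP d + 1 else if d = e then score n s b aP d - 1
     else score n s b aP d)"
proof -
  let ?V = "\<lambda>b x. {i'\<in>{1..n}. b i' = Some x}"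
  have "card (?V (b(i := Some c)) d) =
      (if d = c then card (?V b d) + 1 else if d = e then card (?V b d) - 1 else card (?V b d))"
  proof -
    have "?V (b(i := Some c)) c = insert i (?V b c)" "i \<notin> ?V b c"
      "?V (b(i := Some c)) e = ?V b e - {i}" "i \<in> ?V b e"
      "d \<noteq> c \<Longrightarrow> d \<noteq> e \<Longrightarrow> ?V (b(i := Some c)) d = ?V b d"
      using assms by auto
    then show ?thesis by (simp add: assms(3))
  qed
  moreover have "card (?V b e) > 0" using assms(1,2) by (auto simp: card_gt_0_iff)
  ultimately show ?thesis unfolding score_def by auto
qed

lemma top_mem_and_preferred:
  assumes "m \<ge> 1" "inj_on (u i) {1..m}"
  shows "top m u i \<in> {1..m}" "\<forall>c\<in>{1..m}. c \<noteq> top m u i \<longrightarrow> u i c < u i (top m u i)"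
proof -
  have "Max (u i ` {1..m}) \<in> u i ` {1..m}" using assms by (intro Max_in) auto
  then obtain c where "c \<in> {1..m}" "u i c = Max (u i ` {1..m})" by auto
  then have c: "c \<in> {1..m}" "\<forall>c'\<in>{1..m}. u i c' \<le> u i c" by auto
  have "top m u i = c" unfolding top_def
  proof (rule the_equality)
    fix x assume "x \<in> {1..m} \<and> (\<forall>c'\<in>{1..m}. u i c' \<le> u i x)"
    with c have "u i x = u i c" "x \<in> {1..m}" by (auto intro: le_antisym)
    then show "x = c" using c(1) assms(2) by (auto dest: inj_onD)
  qed (use c in auto)
  then show "top m u i \<in> {1..m}" using c(1) by simp
  show "\<forall>c'\<in>{1..m}. c' \<noteq> top m u i \<longrightarrow> u i c' < u i (top m u i)"
  proof (intro ballI impI)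
    fix c' assume "c' \<in> {1..m}" "c' \<noteq> top m u i"
    then have "u i c' \<noteq> u i c" using \<open>top m u i = c\<close> c(1) assms(2) by (metis inj_onD)
    then show "u i c' < u i (top m u i)" using c(2) \<open>c' \<in> {1..m}\<close> \<open>top m u i = c\<close> by force
  qed
qed

lemma truthful_deviation_unprofitable_iff:
  fixes m n s :: nat and eps :: real and u :: "nat \<Rightarrow> nat \<Rightarrow> nat" and aP :: "nat \<Rightarrow> nat"
  defines "a \<equiv> truthful m u" and "W \<equiv> winners m n s (truthful m u) aP"
    and "H \<equiv> hopefuls m n s (truthful m u) aP" and "j \<equiv> lex_winner m n s (truthful m u) aP"
  assumes "m \<ge> 1" "inj_on (u i) {1..m}" "i \<in> {1..n}" "c \<in> {1..m}" "c \<noteq> top m u i"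
    and "0 \<le> eps" "eps < 1"
  shows "utility m n s eps u aP (a(i := Some c)) i \<le> utility m n s eps u aP a i \<longleftrightarrow>
    \<not> (u i c > u i j \<and> (c \<in> W \<or> (c \<in> H \<and> c < j)))"
proof -
  define f where "f = score n s a aP"
  define M where "M = Max (f ` {1..m})"
  define w' where "w' = lex_argmax m (score n s (a(i := Some c)) aP)"
  have a_i: "a i = Some (top m u i)" unfolding a_def truthful_def ..
  note top = top_mem_and_preferred[of m u i, OF assms(5,6)]
  have j: "j = lex_argmax m f"
    unfolding j_def f_def a_def lex_winner_eq_lex_argmax ..
  have in_W: "c \<in> W \<longleftrightarrow> f c = M" and in_H: "c \<in> H \<longleftrightarrow> f c + 1 = M"
    using assms(8) unfolding W_def H_def winners_def hopefuls_def maxscore_def f_def M_def a_def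
    by auto
  have "utility m n s eps u aP (a(i := Some c)) i \<le> utility m n s eps u aP a i \<longleftrightarrow>
      real (u i w') \<le> real (u i j) + eps"
    using assms(9) a_i unfolding utility_def w'_def j_def a_def
    by (simp add: lex_winner_eq_lex_argmax)
  also have "\<dots> \<longleftrightarrow> u i w' \<le> u i j"
    using assms(10,11) by linarith
  also have "\<dots> \<longleftrightarrow> \<not> (u i c > u i j \<and> (c \<in> W \<or> (c \<in> H \<and> c < j)))"
  proof (cases "top m u i = j")
    case True
    have "w' \<in> {1..m}" using lex_argmax_mem[OF assms(5)] unfolding w'_def by blast
    then show ?thesis using True top assms(8,9) by (metis less_imp_le order.refl not_less)
  next
    case False
    have "w' = (if f c = M \<or> (f c + 1 = M \<and> c < j) then c else j)"
      unfolding w'_def M_def j using assms(5,8) False[unfolded j]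
      by (intro lex_argmax_move_vote) (auto simp: f_def score_fun_upd_Some[where b = a, OF assms(7) a_i assms(9)])
    then show ?thesis using in_W in_H by auto
  qed
  finally show ?thesis .
qed

lemma is_PNE_truthful_iff:
  fixes m n s :: nat and eps :: real and u :: "nat \<Rightarrow> nat \<Rightarrow> nat" and aP :: "nat \<Rightarrow> nat"
  defines "a \<equiv> truthful m u" and "W \<equiv> winners m n s (truthful m u) aP"
    and "H \<equiv> hopefuls m n s (truthful m u) aP" and "j \<equiv> lex_winner m n s (truthful m u) aP"
  assumes "m \<ge> 1" "\<forall>i\<in>{1..n}. inj_on (u i) {1..m}" "0 \<le> eps" "eps < 1"
  shows "is_PNE m n s eps u aP a \<longleftrightarrow> (\<forall>i\<in>{1..n}. \<forall>c\<in>{1..m}. c \<noteq> top m u i \<longrightarrow>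
    \<not> (u i c > u i j \<and> (c \<in> W \<or> (c \<in> H \<and> c < j))))"
    (is "_ \<longleftrightarrow> (\<forall>i\<in>_. \<forall>c\<in>_. _ \<longrightarrow> \<not> ?profitable i c)")
proof -
  have unprofitable: "utility m n s eps u aP (a(i := Some c)) i \<le> utility m n s eps u aP a i
      \<longleftrightarrow> \<not> ?profitable i c" if "i \<in> {1..n}" "c \<in> {1..m}" "c \<noteq> top m u i" for i c
    unfolding j_def W_def H_def a_def
    using truthful_deviation_unprofitable_iff assms(5-8) that by blast
  have valid: "valid_ballot m (a i)" if "i \<in> {1..n}" for i
    using top_mem_and_preferred(1)[of m u i] assms(5,6) that
    unfolding valid_ballot_def a_def truthful_def by auto
  have "utility m n s eps u aP (a(i := x)) i \<le> utility m n s eps u aP a i"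
    if "i \<in> {1..n}" "valid_ballot m x" "\<forall>c\<in>{1..m}. c \<noteq> top m u i \<longrightarrow> \<not> ?profitable i c"
    for i x
  proof (cases x)
    case None
    then show ?thesis unfolding utility_def by simp
  next
    case (Some c)
    then have "c \<in> {1..m}" using that(2) unfolding valid_ballot_def by auto
    moreover have "a(i := Some (top m u i)) = a" unfolding a_def truthful_def by auto
    ultimately show ?thesis
      using Some that unprofitable by (cases "c = top m u i") auto
  qed
  moreover have "valid_ballot m (Some c)" if "c \<in> {1..m}" for c
    using that unfolding valid_ballot_def by blast
  ultimately show ?thesis
    unfolding is_PNE_def using valid unprofitable by meson
qed

theorem proposition9:
  fixes m n s :: nat and eps :: real
    and u :: "nat \<Rightarrow> nat \<Rightarrow> nat" and aP :: "nat \<Rightarrow> nat"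
  assumes "m \<ge> 1" and "n \<ge> 1"
    and "\<forall>i\<in>{1..n}. inj_on (u i) {1..m}"
    and "\<forall>i\<in>{n+1..n+s}. aP i \<in> {1..m}"
    and "0 < eps" and "eps < 1 / real m" and "eps < 1 / real n"
  shows "let a = truthful m u;
             W = winners m n s a aP;
             H = hopefuls m n s a aP;
             j = (LEAST r. r \<in> W)
         in is_PNE m n s eps u aP a \<longleftrightarrow>
            \<not> (card W > 1 \<and> (\<exists>k\<in>W. \<exists>i\<in>{1..n}. top m u i \<noteq> k \<and> u i k > u i j)) \<and>
            \<not> (H \<noteq> {} \<and> (\<exists>k\<in>H. \<exists>i\<in>{1..n}. top m u i \<noteq> k \<and> u i k > u i j \<and> k < j))"
proof -
  define a where "a = truthful m u"
  define W where "W = winners m n s a aP"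
  define H where "H = hopefuls m n s a aP"
  define j where "j = lex_winner m n s a aP"
  have "(LEAST r. r \<in> W) = j" unfolding j_def W_def lex_winner_def ..
  have "1 / real m \<le> 1" using assms(1) by simp
  then have "eps < 1" using assms(6) by linarith
  then have PNE: "is_PNE m n s eps u aP a \<longleftrightarrow> (\<forall>i\<in>{1..n}. \<forall>c\<in>{1..m}. c \<noteq> top m u i \<longrightarrow>
      \<not> (u i c > u i j \<and> (c \<in> W \<or> (c \<in> H \<and> c < j))))"
    unfolding a_def W_def H_def j_def using is_PNE_truthful_iff assms(1,3,5) by simp
  have "j \<in> W"
    using lex_argmax_mem[OF assms(1)]
    unfolding j_def W_def lex_winner_eq_lex_argmax winners_def maxscore_def .
  moreover have "finite W" "W \<subseteq> {1..m}" "H \<subseteq> {1..m}"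
    unfolding W_def H_def winners_def hopefuls_def by auto
  ultimately have card_W: "card W > 1" if "k \<in> W" "k \<noteq> j" for k
    using that card_le_Suc0_iff_eq[of W] by (metis One_nat_def not_less)
  have "(\<forall>i\<in>{1..n}. \<forall>c\<in>{1..m}. c \<noteq> top m u i \<longrightarrow>
        \<not> (u i c > u i j \<and> (c \<in> W \<or> (c \<in> H \<and> c < j)))) \<longleftrightarrow>
      \<not> (\<exists>k\<in>W. \<exists>i\<in>{1..n}. top m u i \<noteq> k \<and> u i k > u i j) \<and>
      \<not> (\<exists>k\<in>H. \<exists>i\<in>{1..n}. top m u i \<noteq> k \<and> u i k > u i j \<and> k < j)"
    using \<open>W \<subseteq> {1..m}\<close> \<open>H \<subseteq> {1..m}\<close> by (auto 0 3)
  moreover have "card W > 1" if "\<exists>k\<in>W. \<exists>i\<in>{1..n}. top m u i \<noteq> k \<and> u i k > u i j"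
    using that card_W by force
  ultimately show ?thesis
    unfolding Let_def a_def[symmetric] W_def[symmetric] H_def[symmetric]
      \<open>(LEAST r. r \<in> W) = j\<close> PNE
    by blast
qed

end
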